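(* Let $n,m,l$ be positive integers, $f:\mathbb{R}^n\times\mathbb{R}^m\to\mathbb{R}^n$, $g:\mathbb{R}^n\times\mathbb{R}^m\to\mathbb{R}^{n\times l}$ smooth with $f(0,0)=0$, $g(0,0)=0$, and consider $\dot x=f(x,u)+g(x,u)\theta$ with constant unknown $\theta\in\mathbb{R}^l$. Let $k:\mathbb{R}^l\times\mathbb{R}^n\to\mathbb{R}^m$ be smooth with $k(\vartheta,0)=0$, and $V_\vartheta,Q_\vartheta:\mathbb{R}^n\to\mathbb{R}_+$ continuous, positive definite, radially unbounded, with $(\vartheta,x)\mapsto V_\vartheta(x),Q_\vartheta(x)$ continuous, such that: (H1) for each $\vartheta$, the origin is globally asymptotically stable for $\dot x=f(x,k(\vartheta,x))+g(x,k(\vartheta,x))\vartheta$ and every solution satisfies $V_\vartheta(x(t))\le Q_\vartheta(x(0))$ for $t\ge0$; (H2) for every nonempty compact $\Theta\subset\mathbb{R}^l$ and $M\ge0$ there is $R>0$ with $V_\vartheta(x)\le M,\ \vartheta\in\Theta\Rightarrow|x|\le R$; (H3) there is a positive integer $N$ such that: if there exist $0=\tau_0<\dots<\tau_N$, $\theta,d_0,\dots,d_N\in\mathbb{R}^l$ with all $d_i\ne0$, and a right differentiable $x\in C^0([0,\tau_N];\mathbb{R}^n)\cap C^1([0,\tau_N]\setminus\{\tau_0,\dots,\tau_N\};\mathbb{R}^n)$ with $\dot x(t)=f(x(t),k(\theta+d_i,x(t)))+g(x(t),k(\theta+d_i,x(t)))\theta$ on $[\tau_i,\tau_{i+1})$,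 $i=0,\dots,N-1$, and $g(x(t),k(\theta+d_j,x(t)))d_{i+1}=0$ for $t\in[\tau_j,\tau_{j+1}]$, $i=0,\dots,N-1$, $j=0,\dots,i$, then $x\equiv0$ on $[0,\tau_N]$. Suppose moreover that for each $\vartheta\in\mathbb{R}^l$ the origin is globally exponentially stable for $\dot x=f(x,k(\vartheta,x))+g(x,k(\vartheta,x))\vartheta$, i.e. there are $M_\vartheta,\omega_\vartheta>0$ with $|x(t)|\le M_\vartheta e^{-\omega_\vartheta t}|x(0)|$ for all solutions and $t\ge0$, and that for every nonempty compact $\Theta\subset\mathbb{R}^l$ there exist $K_2>K_1>0$ with $K_1|x|^2\le V_\vartheta(x)\le Q_\vartheta(x)\le K_2|x|^2$ for all $x\in\mathbb{R}^n$, $\vartheta\in\Theta$. Let $T>0$, let $a:\mathbb{R}^n\to\mathbb{R}_+$ be continuous, positive definite with $\sup\{|x|^{-2}a(x):x\ne0\}<+\infty$, and let $\tilde N>N$ be an integer. Then there exist constants $\tilde M_{\theta,\hat\theta}>0$, $(\theta,\hat\theta)\in\mathbb{R}^l\times\mathbb{R}^l$, such that for every $\theta\in\mathbb{R}^l$, $x_0\in\mathbb{R}^n$, $\hat\theta_0\in\mathbb{R}^l$ the solution of the hybrid closed-loop system (see context) with $x(0)=x_0$, $\hat\theta(0)=\hat\theta_0$ satisfies $|x(t)|\le\tilde M_{\theta,\hat\theta_0}e^{-\omega_\theta t}|x_0|$ for all $t\ge0$.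
   Context: Hybrid closed-loop system: event times $\tau_0=0$, $\tau_{i+1}=\min(\tau_i+T,r_i)$. On $[\tau_i,\tau_{i+1})$: $u(t)=k(\hat\theta(\tau_i),x(t))$, $\hat\theta(t)=\hat\theta(\tau_i)$, $x$ continuous solving $\dot x=f(x,u)+g(x,u)\theta$. Trigger: for $x(\tau_i)\ne0$, $r_i=\inf\{t>\tau_i:V_{\hat\theta(\tau_i)}(x(t))=Q_{\hat\theta(\tau_i)}(x(\tau_i))+a(x(\tau_i))\}$ ($\inf\emptyset=+\infty$); for $x(\tau_i)=0$, $r_i=\tau_i+T$. With $p(t,\sigma)=x(t)-x(\sigma)-\int_\sigma^tf(x(s),u(s))ds$, $q(t,\sigma)=\int_\sigma^tg(x(s),u(s))ds$, $\mu_{i+1}=\min\{\tau_j:j\in\{0,\dots,i\},\tau_j\ge\tau_{i+1}-\tilde NT\}$, $G=\iint_{[\mu_{i+1},\tau_{i+1}]^2}q'(t,\sigma)q(t,\sigma)d\sigma dt$, $Z=\iint_{[\mu_{i+1},\tau_{i+1}]^2}q'(t,\sigma)p(t,\sigma)d\sigma dt$, the update is $\hat\theta(\tau_{i+1})=\arg\min\{|\vartheta-\hat\theta(\tau_i)|^2:\vartheta\in\mathbb{R}^l,\ Z=G\vartheta\}$. Positive definite: $V(0)=0$, $V(x)>0$ for $x\ne0$; radially unbounded: sublevel sets compact. *)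

theory Defs
  imports "HOL-Analysis.Analysis"
begin

text \<open>Smooth (C-infinity) maps between Euclidean spaces: there is a family of
  iterated directional derivatives D vs (D [] = f), each continuous, and each
  Frechet differentiable with derivative v |-> D (v # vs).\<close>
definition smooth :: "('a::euclidean_space \<Rightarrow> 'b::euclidean_space) \<Rightarrow> bool" where
  "smooth f \<longleftrightarrow> (\<exists>D :: 'a list \<Rightarrow> 'a \<Rightarrow> 'b.
      (\<forall>x. D [] x = f x) \<and> (\<forall>vs. continuous_on UNIV (D vs)) \<and>
      (\<forall>vs x. (D vs has_derivative (\<lambda>v. D (v # vs) x)) (at x)))"

definition pos_def :: "('a::real_normed_vector \<Rightarrow> real) \<Rightarrow> bool" where
  "pos_def V \<longleftrightarrow> V 0 = 0 \<and> (\<forall>x. x \<noteq> 0 \<longrightarrow> V x > 0)"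

definition rad_unbounded :: "('a::real_normed_vector \<Rightarrow> real) \<Rightarrow> bool" where
  "rad_unbounded V \<longleftrightarrow> (\<forall>c. compact {x. V x \<le> c})"

definition is_sol :: "('a::real_normed_vector \<Rightarrow> 'a) \<Rightarrow> (real \<Rightarrow> 'a) \<Rightarrow> bool" where
  "is_sol F x \<longleftrightarrow> (\<forall>t\<ge>0. (x has_vector_derivative F (x t)) (at t within {0..}))"

definition GAS :: "('a::real_normed_vector \<Rightarrow> 'a) \<Rightarrow> bool" where
  "GAS F \<longleftrightarrow> (\<forall>x0. \<exists>x. is_sol F x \<and> x 0 = x0) \<and>
     (\<forall>\<epsilon>>0. \<exists>\<delta>>0. \<forall>x. is_sol F x \<and> norm (x 0) < \<delta> \<longrightarrow> (\<forall>t\<ge>0. norm (x t) < \<epsilon>)) \<and>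
     (\<forall>x. is_sol F x \<longrightarrow> (x \<longlongrightarrow> 0) at_top)"

definition cl_field ::
  "(real^'n \<Rightarrow> real^'m \<Rightarrow> real^'n) \<Rightarrow> (real^'n \<Rightarrow> real^'m \<Rightarrow> real^'l^'n)
   \<Rightarrow> (real^'l \<Rightarrow> real^'n \<Rightarrow> real^'m) \<Rightarrow> real^'l \<Rightarrow> real^'l \<Rightarrow> real^'n \<Rightarrow> real^'n" where
  "cl_field f g k \<eta> \<theta> x = f x (k \<eta> x) + g x (k \<eta> x) *v \<theta>"

definition sint :: "real \<Rightarrow> real \<Rightarrow> (real \<Rightarrow> 'a::euclidean_space) \<Rightarrow> 'a" where
  "sint a b h = (if a \<le> b then integral {a..b} h else - integral {b..a} h)"

definition H3 ::
  "(real^'n \<Rightarrow> real^'m \<Rightarrow> real^'n) \<Rightarrow> (real^'n \<Rightarrow> real^'m \<Rightarrow> real^'l^'n)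
   \<Rightarrow> (real^'l \<Rightarrow> real^'n \<Rightarrow> real^'m) \<Rightarrow> nat \<Rightarrow> bool" where
  "H3 f g k N \<longleftrightarrow>
    (\<forall>(\<tau>::nat \<Rightarrow> real) (\<theta>::real^'l) (d::nat \<Rightarrow> real^'l) (x::real \<Rightarrow> real^'n).
      \<tau> 0 = 0 \<and> (\<forall>i<N. \<tau> i < \<tau> (Suc i)) \<and> (\<forall>i\<le>N. d i \<noteq> 0) \<and>
      continuous_on {0..\<tau> N} x \<and>
      (\<forall>i<N. \<forall>t\<in>{\<tau> i..<\<tau> (Suc i)}.
         (x has_vector_derivative cl_field f g k (\<theta> + d i) \<theta> (x t)) (at t within {\<tau> i..\<tau> (Suc i)})) \<and>
      (\<forall>i<N. \<forall>j\<le>i. \<forall>t\<in>{\<tau> j..\<tau> (Suc j)}.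
         g (x t) (k (\<theta> + d j) (x t)) *v d (Suc i) = 0)
      \<longrightarrow> (\<forall>t\<in>{0..\<tau> N}. x t = 0))"

definition hybrid_sol ::
  "(real^'n \<Rightarrow> real^'m \<Rightarrow> real^'n) \<Rightarrow> (real^'n \<Rightarrow> real^'m \<Rightarrow> real^'l^'n)
   \<Rightarrow> (real^'l \<Rightarrow> real^'n \<Rightarrow> real^'m) \<Rightarrow> (real^'l \<Rightarrow> real^'n \<Rightarrow> real)
   \<Rightarrow> (real^'l \<Rightarrow> real^'n \<Rightarrow> real) \<Rightarrow> (real^'n \<Rightarrow> real) \<Rightarrow> real \<Rightarrow> nat
   \<Rightarrow> real^'l \<Rightarrow> (nat \<Rightarrow> real) \<Rightarrow> (real \<Rightarrow> real^'n) \<Rightarrow> (real \<Rightarrow> real^'l) \<Rightarrow> bool" where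
  "hybrid_sol f g k V Q a T Nt \<theta> \<tau> x th \<longleftrightarrow>
    \<tau> 0 = 0 \<and>
    (\<forall>t\<ge>0. \<exists>i. t < \<tau> i) \<and>
    (\<forall>i. \<tau> (Suc i) =
       (if x (\<tau> i) = 0 then \<tau> i + T
        else (let S = {t. t > \<tau> i \<and> V (th (\<tau> i)) (x t) = Q (th (\<tau> i)) (x (\<tau> i)) + a (x (\<tau> i))}
              in if S = {} then \<tau> i + T else min (\<tau> i + T) (Inf S)))) \<and>
    (\<forall>i. \<forall>t\<in>{\<tau> i..<\<tau> (Suc i)}. th t = th (\<tau> i)) \<and>
    continuous_on {0..} x \<and>
    (\<forall>i. \<forall>t\<in>{\<tau> i..<\<tau> (Suc i)}.
       (x has_vector_derivative cl_field f g k (th (\<tau> i)) \<theta> (x t)) (at t within {\<tau> i..\<tau> (Suc i)})) \<and>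
    (\<forall>i. let u = (\<lambda>s. k (th s) (x s));
             p = (\<lambda>t \<sigma>. x t - x \<sigma> - sint \<sigma> t (\<lambda>s. f (x s) (u s)));
             q = (\<lambda>t \<sigma>. sint \<sigma> t (\<lambda>s. g (x s) (u s)));
             \<mu> = Min {\<tau> j | j. j \<le> i \<and> \<tau> j \<ge> \<tau> (Suc i) - real Nt * T};
             G = integral {\<mu>..\<tau> (Suc i)} (\<lambda>t. integral {\<mu>..\<tau> (Suc i)}
                    (\<lambda>\<sigma>. transpose (q t \<sigma>) ** q t \<sigma>));
             Z = integral {\<mu>..\<tau> (Suc i)} (\<lambda>t. integral {\<mu>..\<tau> (Suc i)}
                    (\<lambda>\<sigma>. transpose (q t \<sigma>) *v p t \<sigma>))
         in G *v th (\<tau> (Suc i)) = Z \<and>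
            (\<forall>\<eta>. G *v \<eta> = Z \<longrightarrow>
               (norm (th (\<tau> (Suc i)) - th (\<tau> i)))\<^sup>2 \<le> (norm (\<eta> - th (\<tau> i)))\<^sup>2))"

end

theory Submission
  imports Defs
begin

text \<open>The update law chooses, among all parameters consistent with the data of the last
  Nt T time units, the one closest to the current estimate. By the fundamental theorem of
  calculus the true parameter \<theta> is always consistent (Z = G \<theta>), so the estimation error at
  most doubles at each event and, once zero, stays zero. If it were nonzero at the first N+1
  events, the errors d_i would lie in the kernels of the Gram matrices G, hence in the kernel of
  g along the trajectory, and (H3) would force x = 0. So the estimate is exact after at most N
  events. Before that, the trigger keeps V below Q + a at the last event, which with the
  quadratic bounds on V, Q and a gives |x(t)| \<le> c^N |x_0|; afterwards x solves the true
  closed loop and decays exponentially.\<close>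

lemma
  assumes "smooth h"
  shows smooth_imp_differentiable: "h differentiable (at z)"
    and smooth_imp_continuous_on: "continuous_on UNIV h"
proof -
  obtain D where D: "\<forall>x. D [] x = h x" "\<forall>vs. continuous_on UNIV (D vs)"
    "\<forall>vs x. (D vs has_derivative (\<lambda>v. D (v # vs) x)) (at x)"
    using assms unfolding smooth_def by blast
  then have "D [] = h" by auto
  with D show "h differentiable (at z)" "continuous_on UNIV h"
    unfolding differentiable_def by metis+
qed

lemma bounded_linear_matrix_vector_mult_left: "bounded_linear (\<lambda>M::real^'a^'b. M *v v)"
  unfolding linear_conv_bounded_linear[symmetric]
  by (rule linearI) (simp_all add: matrix_vector_mult_add_rdistrib scaleR_matrix_vector_assoc)

lemma bounded_linear_transpose: "bounded_linear (transpose :: real^'a^'b \<Rightarrow> real^'b^'a)"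
  unfolding linear_conv_bounded_linear[symmetric]
  by (rule linearI) (simp_all add: transpose_def vec_eq_iff)

lemma bilinear_matrix_matrix_mult: "bilinear (\<lambda>(A::real^'a^'b) (B::real^'c^'a). A ** B)"
  unfolding bilinear_def
  by (auto intro!: linearI simp: matrix_matrix_mult_def vec_eq_iff sum.distrib algebra_simps
      sum_distrib_left)

lemma continuous_on_matrix_matrix_mult:
  fixes A :: "'d::t2_space \<Rightarrow> real^'a^'b" and B :: "'d \<Rightarrow> real^'c^'a"
  assumes "continuous_on S A" "continuous_on S B"
  shows "continuous_on S (\<lambda>s. A s ** B s)"
  using bilinear_continuous_on_compose[OF assms bilinear_matrix_matrix_mult] by simp

lemma continuous_on_transpose:
  fixes A :: "'d::topological_space \<Rightarrow> real^'a^'b"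
  shows "continuous_on S A \<Longrightarrow> continuous_on S (\<lambda>s. transpose (A s))"
  by (rule bounded_linear.continuous_on[OF bounded_linear_transpose])

lemma continuous_on_compose_uncurried:
  assumes "continuous_on UNIV (\<lambda>(x, u). h x u)" "continuous_on S p" "continuous_on S q"
  shows "continuous_on S (\<lambda>s. h (p s) (q s))"
  using continuous_on_compose2[OF assms(1) continuous_on_Pair[OF assms(2,3)]] by auto

lemma continuous_on_slice:
  assumes "continuous_on (A \<times> B) (\<lambda>(t, \<sigma>). M t \<sigma>)" "t \<in> A"
  shows "continuous_on B (M t)"
  using continuous_on_compose2[OF assms(1) continuous_on_Pair[OF continuous_on_const continuous_on_id]]
    assms(2) by auto

lemma differentiable_imp_linear_bound_near_0:
  fixes F :: "'a::real_normed_vector \<Rightarrow> 'b::real_normed_vector"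
  assumes "F differentiable (at 0)" "F 0 = 0"
  shows "\<exists>\<delta>>0. \<exists>L\<ge>0. \<forall>z. norm z \<le> \<delta> \<longrightarrow> norm (F z) \<le> L * norm z"
proof -
  from assms(1) obtain F' where "(F has_derivative F') (at 0)"
    unfolding differentiable_def by blast
  then have bl: "bounded_linear F'" and
    approx: "\<forall>e>0. \<exists>d>0. \<forall>y. norm (y - 0) < d \<longrightarrow> norm (F y - F 0 - F' (y - 0)) \<le> e * norm (y - 0)"
    unfolding has_derivative_at_alt by blast+
  obtain B where B: "B > 0" "\<And>z. norm (F' z) \<le> norm z * B"
    using bounded_linear.pos_bounded[OF bl] by blast
  obtain d where d: "d > 0" "\<And>y. norm y < d \<Longrightarrow> norm (F y - F' y) \<le> norm y"
    using approx[rule_format, of 1] assms(2) by auto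
  have "norm (F z) \<le> (B + 1) * norm z" if "norm z \<le> d/2" for z
  proof -
    have "norm (F z) \<le> norm (F z - F' z) + norm (F' z)"
      using norm_triangle_ineq[of "F z - F' z" "F' z"] by simp
    also have "\<dots> \<le> norm z + norm z * B"
      using d(2)[of z] B(2)[of z] that d(1) by force
    finally show ?thesis by (simp add: algebra_simps)
  qed
  then show ?thesis using d B by (intro exI[of _ "d/2"] conjI exI[of _ "B + 1"]) auto
qed

lemma exp_weighted_norm_nonincreasing:
  fixes y :: "real \<Rightarrow> 'a::euclidean_space" and F :: "'a \<Rightarrow> 'a"
  assumes F: "\<And>z. norm z \<le> \<delta> \<Longrightarrow> norm (F z) \<le> L * norm z"
    and y_cont: "continuous_on {c..d} y"
    and y_deriv: "\<And>t. t \<in> {c<..<d} \<Longrightarrow> (y has_vector_derivative F (y t)) (at t)"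
    and small: "\<And>s. s \<in> {c..d} \<Longrightarrow> norm (y s) \<le> \<delta>" and "c \<le> d"
  shows "exp (- (2*L) * d) * (norm (y d))\<^sup>2 \<le> exp (- (2*L) * c) * (norm (y c))\<^sup>2"
proof -
  define \<psi> where "\<psi> s = exp (- (2*L) * s) * (y s \<bullet> y s)" for s
  have "\<psi> d \<le> \<psi> c"
  proof (rule DERIV_nonpos_imp_decreasing_open[OF \<open>c \<le> d\<close>])
    fix s assume s: "c < s" "s < d"
    then have dy: "(y has_derivative (\<lambda>h. h *\<^sub>R F (y s))) (at s)"
      using y_deriv[of s] by (simp add: has_vector_derivative_def)
    have "((\<lambda>s. y s \<bullet> y s) has_real_derivative 2 * (y s \<bullet> F (y s))) (at s)"
      unfolding has_field_derivative_def
      by (rule has_derivative_eq_rhs[OF has_derivative_inner[OF dy dy]])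
        (auto simp: inner_commute algebra_simps fun_eq_iff)
    then have "(\<psi> has_real_derivative
        2 * exp (- (2*L) * s) * (y s \<bullet> F (y s) - L * (y s \<bullet> y s))) (at s)"
      unfolding \<psi>_def by (auto intro!: derivative_eq_intros simp: algebra_simps)
    moreover have "y s \<bullet> F (y s) \<le> L * (y s \<bullet> y s)"
    proof -
      have "y s \<bullet> F (y s) \<le> norm (y s) * norm (F (y s))" by (rule norm_cauchy_schwarz)
      also have "\<dots> \<le> norm (y s) * (L * norm (y s))"
        using F small s by (intro mult_left_mono) auto
      finally show ?thesis by (simp add: power2_norm_eq_inner[symmetric] power2_eq_square algebra_simps)
    qed
    then have "2 * exp (- (2*L) * s) * (y s \<bullet> F (y s) - L * (y s \<bullet> y s)) \<le> 0"
      by (intro mult_nonneg_nonpos) auto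
    ultimately show "\<exists>D. (\<psi> has_real_derivative D) (at s) \<and> D \<le> 0" by blast
  qed (use y_cont in \<open>auto simp: \<psi>_def intro!: continuous_intros\<close>)
  then show ?thesis by (simp add: \<psi>_def power2_norm_eq_inner)
qed

text \<open>Uniqueness of the zero solution: on a short interval after the last zero c of y,
  |y| stays below \<delta>, so exp(-2Ls)|y(s)|^2 cannot grow from its value 0 at c.\<close>
lemma ode_solution_from_0_eq_0:
  fixes y :: "real \<Rightarrow> 'a::euclidean_space" and F :: "'a \<Rightarrow> 'a"
  assumes F: "\<And>z. norm z \<le> \<delta> \<Longrightarrow> norm (F z) \<le> L * norm z" and "\<delta> > 0"
    and y_cont: "continuous_on {a..b} y"
    and y_deriv: "\<And>t. t \<in> {a<..<b} \<Longrightarrow> (y has_vector_derivative F (y t)) (at t)"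
    and "y a = 0" and t: "t \<in> {a..b}"
  shows "y t = 0"
proof (rule ccontr)
  assume "y t \<noteq> 0"
  define Z where "Z = {s \<in> {a..t}. y s = 0}"
  have y_cont': "continuous_on {a..t} y" using y_cont t by (auto intro: continuous_on_subset)
  have "closed Z"
    unfolding Z_def using continuous_closed_preimage_constant[OF y_cont'] by simp
  moreover have "bounded Z" unfolding Z_def by (rule bounded_subset[of "{a..t}"]) auto
  moreover have "a \<in> Z" using \<open>y a = 0\<close> t by (auto simp: Z_def)
  ultimately have "Sup Z \<in> Z" and Sup_upper: "\<And>s. s \<in> Z \<Longrightarrow> s \<le> Sup Z"
    by (auto intro: closed_contains_Sup cSup_upper bounded_imp_bdd_above)
  define c where "c = Sup Z"
  have c: "y c = 0" "a \<le> c" "c \<le> t" using \<open>Sup Z \<in> Z\<close> by (auto simp: Z_def c_def)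
  have "c < t" using c \<open>y t \<noteq> 0\<close> by (cases "c = t") auto
  have last_zero: "y s \<noteq> 0" if "s \<in> {c<..t}" for s
  proof
    assume "y s = 0"
    with that c have "s \<in> Z" by (auto simp: Z_def)
    from Sup_upper[OF this] that show False by (simp add: c_def)
  qed
  have "continuous (at c within {a..t}) y"
    using y_cont' c by (simp add: continuous_on_eq_continuous_within)
  then obtain e where e: "e > 0" "\<And>s. s \<in> {a..t} \<Longrightarrow> dist s c < e \<Longrightarrow> dist (y s) (y c) < \<delta>"
    using \<open>\<delta> > 0\<close> unfolding continuous_within_eps_delta by blast
  define s1 where "s1 = min t (c + e/2)"
  have s1: "c < s1" "s1 \<le> t" using e \<open>c < t\<close> by (auto simp: s1_def)
  have "exp (- (2*L) * s1) * (norm (y s1))\<^sup>2 \<le> exp (- (2*L) * c) * (norm (y c))\<^sup>2"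
  proof (rule exp_weighted_norm_nonincreasing[OF F])
    show "continuous_on {c..s1} y" using y_cont' c s1 by (auto intro: continuous_on_subset)
    show "norm (y s) \<le> \<delta>" if "s \<in> {c..s1}" for s
      using e(2)[of s] that c s1 e(1) by (auto simp: s1_def dist_real_def dist_norm)
  qed (use y_deriv c s1 t in auto)
  then have "y s1 = 0" using c by (simp add: mult_le_0_iff)
  then show False using last_zero s1 by simp
qed

lemma continuous_on_integral_slice:
  fixes M :: "real \<Rightarrow> real \<Rightarrow> 'a::euclidean_space"
  assumes "continuous_on ({c..d} \<times> {c..d}) (\<lambda>(t, \<sigma>). M t \<sigma>)"
  shows "continuous_on {c..d} (\<lambda>t. integral {c..d} (M t))"
  using integral_continuous_on_param[of "{c..d}" c d M] assms by (simp add: cbox_interval)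

lemma integral_integral_bounded_linear:
  fixes M :: "real \<Rightarrow> real \<Rightarrow> 'a::euclidean_space" and L :: "'a \<Rightarrow> 'b::euclidean_space"
  assumes M_cont: "continuous_on ({c..d} \<times> {c..d}) (\<lambda>(t, \<sigma>). M t \<sigma>)" and L: "bounded_linear L"
  shows "integral {c..d} (\<lambda>t. integral {c..d} (\<lambda>\<sigma>. L (M t \<sigma>)))
    = L (integral {c..d} (\<lambda>t. integral {c..d} (M t)))"
proof -
  have "integral {c..d} (\<lambda>\<sigma>. L (M t \<sigma>)) = L (integral {c..d} (M t))" if "t \<in> {c..d}" for t
    using integral_linear[OF integrable_continuous_real[OF continuous_on_slice[OF M_cont that]] L]
    by (simp add: o_def)
  then have "integral {c..d} (\<lambda>t. integral {c..d} (\<lambda>\<sigma>. L (M t \<sigma>)))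
      = integral {c..d} (\<lambda>t. L (integral {c..d} (M t)))"
    by (rule integral_cong)
  also have "\<dots> = L (integral {c..d} (\<lambda>t. integral {c..d} (M t)))"
    using integral_linear[OF integrable_continuous_real[OF continuous_on_integral_slice[OF M_cont]] L]
    by (simp add: o_def)
  finally show ?thesis .
qed

lemma integral_integral_nonneg_eq_0_imp_eq_0:
  fixes h :: "real \<Rightarrow> real \<Rightarrow> real"
  assumes h_cont: "continuous_on ({c..d} \<times> {c..d}) (\<lambda>(t, \<sigma>). h t \<sigma>)"
    and h_nonneg: "\<And>t \<sigma>. h t \<sigma> \<ge> 0" and "c < d"
    and "integral {c..d} (\<lambda>t. integral {c..d} (h t)) = 0"
    and t: "t \<in> {c..d}" and \<sigma>: "\<sigma> \<in> {c..d}"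
  shows "h t \<sigma> = 0"
proof -
  let ?H = "\<lambda>t. integral {c..d} (h t)"
  have H_cont: "continuous_on {c..d} ?H" by (rule continuous_on_integral_slice[OF h_cont])
  have h_int: "h t' integrable_on {c..d}" if "t' \<in> {c..d}" for t'
    by (rule integrable_continuous_real[OF continuous_on_slice[OF h_cont that]])
  have "(?H has_integral 0) {c..d}"
    using assms(4) integrable_continuous_real[OF H_cont] by (metis has_integral_integral)
  then have "?H t = 0"
    using has_integral_0_cbox_imp_0[of c d ?H t] H_cont h_int h_nonneg \<open>c < d\<close> t
    by (auto simp: cbox_interval box_real integral_nonneg)
  then have "(h t has_integral 0) {c..d}" using h_int[OF t] by (metis has_integral_integral)
  then show ?thesis
    using has_integral_0_cbox_imp_0[of c d "h t" \<sigma>] continuous_on_slice[OF h_cont t] h_nonneg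
      \<open>c < d\<close> \<sigma>
    by (auto simp: cbox_interval box_real)
qed

lemma bdd_above_quotient_imp_quadratic_bound:
  fixes a :: "'a::real_normed_vector \<Rightarrow> real"
  assumes "bdd_above {a x / (norm x)\<^sup>2 | x. x \<noteq> 0}" and "a 0 = 0"
  shows "\<exists>A\<ge>0. \<forall>y. a y \<le> A * (norm y)\<^sup>2"
proof -
  obtain A0 where A0: "\<And>y. y \<noteq> 0 \<Longrightarrow> a y / (norm y)\<^sup>2 \<le> A0"
    using assms(1) unfolding bdd_above_def by blast
  have "a y \<le> max A0 0 * (norm y)\<^sup>2" for y
  proof (cases "y = 0")
    case False
    then have "a y \<le> A0 * (norm y)\<^sup>2" using A0[of y] by (simp add: divide_le_eq)
    also have "\<dots> \<le> max A0 0 * (norm y)\<^sup>2" by (intro mult_right_mono) auto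
    finally show ?thesis .
  qed (use assms(2) in simp)
  then show ?thesis by (intro exI[of _ "max A0 0"]) auto
qed

lemma continuous_on_cl_field:
  assumes "continuous_on UNIV (\<lambda>(x, u). f x u)" "continuous_on UNIV (\<lambda>(x, u). g x u)"
    and "continuous_on UNIV (\<lambda>(\<eta>, x). k \<eta> x)"
  shows "continuous_on UNIV (cl_field f g k \<eta> \<theta>)"
proof -
  have "continuous_on UNIV (\<lambda>z. k \<eta> z)"
    using continuous_on_compose_uncurried[OF assms(3) continuous_on_const continuous_on_id] .
  then have "continuous_on UNIV (\<lambda>z. f z (k \<eta> z))" "continuous_on UNIV (\<lambda>z. g z (k \<eta> z))"
    using continuous_on_compose_uncurried[OF assms(1) continuous_on_id]
      continuous_on_compose_uncurried[OF assms(2) continuous_on_id] by blast+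
  then show ?thesis
    unfolding cl_field_def[abs_def]
    by (intro continuous_on_add bounded_linear.continuous_on[OF bounded_linear_matrix_vector_mult_left])
qed

lemma cl_field_linear_bound_near_0:
  assumes "smooth (\<lambda>(x, u). f x u)" "f 0 0 = 0" "smooth (\<lambda>(x, u). g x u)" "g 0 0 = 0"
    and "smooth (\<lambda>(\<eta>, x). k \<eta> x)" "k \<eta> 0 = 0"
  shows "\<exists>\<delta>>0. \<exists>L\<ge>0. \<forall>z. norm z \<le> \<delta> \<longrightarrow> norm (cl_field f g k \<eta> \<theta> z) \<le> L * norm z"
proof (rule differentiable_imp_linear_bound_near_0)
  let ?lift = "\<lambda>z. (z, k \<eta> z)"
  have "(\<lambda>z. (\<eta>, z)) differentiable (at z)" for z
    by (auto intro!: derivative_intros simp: differentiable_def)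
  then have "((\<lambda>(\<eta>, x). k \<eta> x) \<circ> (\<lambda>z. (\<eta>, z))) differentiable (at z)" for z
    by (rule differentiable_chain_at[OF _ smooth_imp_differentiable[OF assms(5)]])
  then have lift: "?lift differentiable (at z)" for z
    by (auto intro!: differentiable_Pair simp: o_def)
  have "((\<lambda>(x, u). f x u) \<circ> ?lift) differentiable (at 0)"
    by (rule differentiable_chain_at[OF lift smooth_imp_differentiable[OF assms(1)]])
  moreover have "((\<lambda>M. M *v \<theta>) \<circ> ((\<lambda>(x, u). g x u) \<circ> ?lift)) differentiable (at 0)"
    by (intro differentiable_chain_at[OF differentiable_chain_at[OF lift]]
        smooth_imp_differentiable[OF assms(3)] bounded_linear_imp_differentiable
        bounded_linear_matrix_vector_mult_left)
  ultimately show "cl_field f g k \<eta> \<theta> differentiable (at 0)"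
    unfolding cl_field_def[abs_def] using differentiable_add by (fastforce simp: o_def)
  show "cl_field f g k \<eta> \<theta> 0 = 0" using assms by (simp add: cl_field_def)
qed

locale hybrid_trajectory =
  fixes f :: "real^'n \<Rightarrow> real^'m \<Rightarrow> real^'n"
    and g :: "real^'n \<Rightarrow> real^'m \<Rightarrow> real^'l^'n"
    and k :: "real^'l \<Rightarrow> real^'n \<Rightarrow> real^'m"
    and V Q :: "real^'l \<Rightarrow> real^'n \<Rightarrow> real"
    and a :: "real^'n \<Rightarrow> real" and T :: real and Nt :: nat and \<theta> :: "real^'l"
    and \<tau> :: "nat \<Rightarrow> real" and x :: "real \<Rightarrow> real^'n" and th :: "real \<Rightarrow> real^'l"
  assumes hybrid_sol: "hybrid_sol f g k V Q a T Nt \<theta> \<tau> x th"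
    and f_cont: "continuous_on UNIV (\<lambda>(x, u). f x u)"
    and g_cont: "continuous_on UNIV (\<lambda>(x, u). g x u)"
    and k_cont: "continuous_on UNIV (\<lambda>(\<eta>, x). k \<eta> x)"
    and T_pos: "T > 0" and Nt_pos: "Nt > 0"
    and V_le_Q: "\<And>\<eta> y. V \<eta> y \<le> Q \<eta> y"
    and V_cont: "\<And>\<eta>. continuous_on UNIV (V \<eta>)"
    and a_pos: "\<And>y. y \<noteq> 0 \<Longrightarrow> a y > 0"
    and cl_field_linear_bound:
      "\<And>\<eta>. \<exists>\<delta>>0. \<exists>L\<ge>0. \<forall>z. norm z \<le> \<delta> \<longrightarrow> norm (cl_field f g k \<eta> \<theta> z) \<le> L * norm z"
begin

definition "trigger_level i = Q (th (\<tau> i)) (x (\<tau> i)) + a (x (\<tau> i))"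
definition "trigger_set i = {t. t > \<tau> i \<and> V (th (\<tau> i)) (x t) = trigger_level i}"

lemma tau_0: "\<tau> 0 = 0"
  using hybrid_sol by (simp add: hybrid_sol_def)

lemma tau_unbounded: "0 \<le> t \<Longrightarrow> \<exists>i. t < \<tau> i"
  using hybrid_sol unfolding hybrid_sol_def by blast

lemma tau_Suc: "\<tau> (Suc i) =
  (if x (\<tau> i) = 0 \<or> trigger_set i = {} then \<tau> i + T else min (\<tau> i + T) (Inf (trigger_set i)))"
proof -
  have "\<tau> (Suc i) = (if x (\<tau> i) = 0 then \<tau> i + T
      else (let S = {t. t > \<tau> i \<and> V (th (\<tau> i)) (x t) = Q (th (\<tau> i)) (x (\<tau> i)) + a (x (\<tau> i))}
            in if S = {} then \<tau> i + T else min (\<tau> i + T) (Inf S)))"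
    using hybrid_sol unfolding hybrid_sol_def by blast
  then show ?thesis
    unfolding Let_def trigger_set_def trigger_level_def
    by (cases "x (\<tau> i) = 0") (simp_all only: if_True if_False simp_thms)
qed

lemma th_on_piece: "t \<in> {\<tau> i..<\<tau> (Suc i)} \<Longrightarrow> th t = th (\<tau> i)"
  using hybrid_sol unfolding hybrid_sol_def by blast

lemma x_cont: "continuous_on {0..} x"
  using hybrid_sol unfolding hybrid_sol_def by blast

lemma x_deriv_on_piece: "t \<in> {\<tau> i..<\<tau> (Suc i)} \<Longrightarrow>
  (x has_vector_derivative cl_field f g k (th (\<tau> i)) \<theta> (x t)) (at t within {\<tau> i..\<tau> (Suc i)})"
  using hybrid_sol unfolding hybrid_sol_def by blast

lemma tau_le_Suc: "\<tau> i \<le> \<tau> (Suc i)" and tau_Suc_le: "\<tau> (Suc i) \<le> \<tau> i + T"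
proof -
  have "\<tau> i \<le> Inf (trigger_set i)" if "trigger_set i \<noteq> {}"
    using that by (intro cInf_greatest) (auto simp: trigger_set_def)
  then show "\<tau> i \<le> \<tau> (Suc i)" "\<tau> (Suc i) \<le> \<tau> i + T" using T_pos by (auto simp: tau_Suc)
qed

lemma tau_mono: "i \<le> j \<Longrightarrow> \<tau> i \<le> \<tau> j"
  using tau_le_Suc by (rule lift_Suc_mono_le)

lemma tau_nonneg: "0 \<le> \<tau> i"
  using tau_mono[of 0 i] tau_0 by simp

lemma tau_le_multiple_T: "\<tau> i \<le> real i * T"
proof (induction i)
  case (Suc i)
  then show ?case using tau_Suc_le[of i] by (simp add: algebra_simps)
qed (simp add: tau_0)

lemma less_of_tau_less: "\<tau> i < \<tau> j \<Longrightarrow> i < j"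
  using tau_mono[of j i] by linarith

lemma V_along_x_cont: "continuous_on {0..} (\<lambda>t. V \<eta> (x t))"
  using continuous_on_compose2[OF V_cont x_cont] by auto

lemma V_less_trigger_level: "x (\<tau> i) \<noteq> 0 \<Longrightarrow> V (th (\<tau> i)) (x (\<tau> i)) < trigger_level i"
  using V_le_Q[of "th (\<tau> i)" "x (\<tau> i)"] a_pos[of "x (\<tau> i)"] by (simp add: trigger_level_def)

text \<open>V starts strictly below the trigger level, so by continuity the level is not reached
  immediately.\<close>
lemma tau_less_Suc: "\<tau> i < \<tau> (Suc i)"
proof (cases "x (\<tau> i) = 0 \<or> trigger_set i = {}")
  case True then show ?thesis using T_pos by (simp add: tau_Suc)
next
  case False
  let ?\<phi> = "\<lambda>t. V (th (\<tau> i)) (x t)"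
  have "continuous (at (\<tau> i) within {0..}) ?\<phi>"
    using V_along_x_cont tau_nonneg by (simp add: continuous_on_eq_continuous_within)
  moreover have "trigger_level i - ?\<phi> (\<tau> i) > 0" using V_less_trigger_level False by simp
  ultimately obtain e where e: "e > 0" "\<And>t. t \<in> {0..} \<Longrightarrow> dist t (\<tau> i) < e \<Longrightarrow>
      dist (?\<phi> t) (?\<phi> (\<tau> i)) < trigger_level i - ?\<phi> (\<tau> i)"
    unfolding continuous_within_eps_delta by metis
  have "\<tau> i + e \<le> Inf (trigger_set i)"
  proof (rule cInf_greatest)
    fix t assume t: "t \<in> trigger_set i"
    show "\<tau> i + e \<le> t"
    proof (rule ccontr)
      assume "\<not> \<tau> i + e \<le> t"
      then show False
        using t e(2)[of t] tau_nonneg[of i] by (auto simp: trigger_set_def dist_real_def)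
    qed
  qed (use False in auto)
  then show ?thesis using e False T_pos by (simp add: tau_Suc)
qed

lemma tau_strict_mono: "strict_mono \<tau>"
  unfolding strict_mono_Suc_iff using tau_less_Suc by blast

lemma piece_exists: "0 \<le> t \<Longrightarrow> \<exists>j. \<tau> j \<le> t \<and> t < \<tau> (Suc j)"
proof -
  assume "0 \<le> t"
  define m where "m = (LEAST i. t < \<tau> i)"
  have "t < \<tau> m" unfolding m_def using tau_unbounded[OF \<open>0 \<le> t\<close>] by (rule LeastI_ex)
  moreover have "m \<noteq> 0" using \<open>t < \<tau> m\<close> \<open>0 \<le> t\<close> tau_0 by (cases m) auto
  moreover have "m - 1 < m" using \<open>m \<noteq> 0\<close> by simp
  then have "\<not> t < \<tau> (m - 1)" unfolding m_def by (rule not_less_Least)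
  ultimately show ?thesis by (intro exI[of _ "m - 1"]) simp
qed

text \<open>Between events V stays below the trigger level: otherwise, by the intermediate value
  theorem, the level is hit strictly before the event time, contradicting its minimality.\<close>
lemma V_le_trigger_level:
  assumes "x (\<tau> i) \<noteq> 0" and t: "t \<in> {\<tau> i..\<tau> (Suc i)}"
  shows "V (th (\<tau> i)) (x t) \<le> trigger_level i"
proof (rule ccontr)
  let ?\<phi> = "\<lambda>t. V (th (\<tau> i)) (x t)"
  assume "\<not> ?\<phi> t \<le> trigger_level i"
  moreover have "continuous_on {\<tau> i..t} ?\<phi>"
    by (rule continuous_on_subset[OF V_along_x_cont]) (use tau_nonneg[of i] in auto)
  ultimately obtain s where s: "\<tau> i \<le> s" "s \<le> t" "?\<phi> s = trigger_level i"
    using IVT'[of ?\<phi> "\<tau> i" "trigger_level i" t] V_less_trigger_level[OF assms(1)] t by auto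
  then have "s \<noteq> \<tau> i" using V_less_trigger_level[OF assms(1)] by auto
  with s have "s \<in> trigger_set i" by (simp add: trigger_set_def)
  then have "Inf (trigger_set i) \<le> s" "trigger_set i \<noteq> {}"
    by (auto intro!: cInf_lower bdd_belowI[of _ "\<tau> i"] simp: trigger_set_def)
  moreover have "t \<le> Inf (trigger_set i)" using t assms(1) \<open>trigger_set i \<noteq> {}\<close> by (simp add: tau_Suc)
  ultimately have "s = t" using s(2) by linarith
  with s(3) \<open>\<not> ?\<phi> t \<le> trigger_level i\<close> show False by simp
qed

definition "f_along s = f (x s) (k (th s) (x s))"
definition "g_along s = g (x s) (k (th s) (x s))"
definition "f_piece j s = f (x s) (k (th (\<tau> j)) (x s))"
definition "g_piece j s = g (x s) (k (th (\<tau> j)) (x s))"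

lemma f_along_eq_piece: "s \<in> {\<tau> j..<\<tau> (Suc j)} \<Longrightarrow> f_along s = f_piece j s"
  and g_along_eq_piece: "s \<in> {\<tau> j..<\<tau> (Suc j)} \<Longrightarrow> g_along s = g_piece j s"
  using th_on_piece by (simp_all add: f_along_def f_piece_def g_along_def g_piece_def)

lemma continuous_on_f_piece: "continuous_on {0..} (f_piece j)"
  and continuous_on_g_piece: "continuous_on {0..} (g_piece j)"
proof -
  have "continuous_on {0..} (\<lambda>s. k (th (\<tau> j)) (x s))"
    using continuous_on_compose_uncurried[OF k_cont continuous_on_const x_cont] .
  then show "continuous_on {0..} (f_piece j)" "continuous_on {0..} (g_piece j)"
    unfolding f_piece_def[abs_def] g_piece_def[abs_def]
    using continuous_on_compose_uncurried[OF f_cont x_cont]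
      continuous_on_compose_uncurried[OF g_cont x_cont] by blast+
qed

lemma piecewise_continuous_integrable:
  fixes h :: "real \<Rightarrow> 'b::euclidean_space"
  assumes h_piece_cont: "\<And>j. continuous_on {0..} (h_piece j)"
    and h_eq: "\<And>j s. s \<in> {\<tau> j..<\<tau> (Suc j)} \<Longrightarrow> h s = h_piece j s" and "0 \<le> c"
  shows "h integrable_on {c..d}"
proof -
  have on_piece: "h integrable_on {\<tau> j..\<tau> (Suc j)}" for j
  proof (rule integrable_spike_finite[of "{\<tau> (Suc j)}"])
    show "h_piece j integrable_on {\<tau> j..\<tau> (Suc j)}"
      by (rule integrable_continuous_real, rule continuous_on_subset[OF h_piece_cont])
        (use tau_nonneg in auto)
  qed (use h_eq in auto)
  have up_to_tau: "h integrable_on {0..\<tau> n}" for n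
  proof (induction n)
    case 0 then show ?case using tau_0 integrable_on_refl[of h 0] by simp
  next
    case (Suc n)
    show ?case
      by (rule Henstock_Kurzweil_Integration.integrable_combine[OF tau_nonneg tau_le_Suc Suc on_piece])
  qed
  show ?thesis
  proof (cases "c \<le> d")
    case True
    obtain n where "d < \<tau> n" using tau_unbounded[of d] True \<open>0 \<le> c\<close> by auto
    then show ?thesis using \<open>0 \<le> c\<close> by (intro integrable_subinterval_real[OF up_to_tau[of n]]) auto
  qed (simp add: integrable_on_empty)
qed

lemma f_along_integrable: "0 \<le> c \<Longrightarrow> f_along integrable_on {c..d}"
  by (rule piecewise_continuous_integrable[OF continuous_on_f_piece f_along_eq_piece])

lemma g_along_integrable: "0 \<le> c \<Longrightarrow> g_along integrable_on {c..d}"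
  by (rule piecewise_continuous_integrable[OF continuous_on_g_piece g_along_eq_piece])

lemma x_deriv_inside_piece: "\<tau> j < s \<Longrightarrow> s < \<tau> (Suc j) \<Longrightarrow>
  (x has_vector_derivative cl_field f g k (th (\<tau> j)) \<theta> (x s)) (at s)"
  using x_deriv_on_piece[of s j] at_within_interior[of s "{\<tau> j..\<tau> (Suc j)}"] by simp

lemma x_increment_has_integral:
  assumes "0 \<le> \<sigma>" "\<sigma> \<le> t"
  shows "((\<lambda>s. f_along s + g_along s *v \<theta>) has_integral (x t - x \<sigma>)) {\<sigma>..t}"
proof -
  obtain I where I: "t < \<tau> I" using tau_unbounded[of t] assms by auto
  show ?thesis
  proof (rule fundamental_theorem_of_calculus_interior_strong[of "\<tau> ` {..I}"])
    show "continuous_on {\<sigma>..t} x" by (rule continuous_on_subset[OF x_cont]) (use assms in auto)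
    fix s assume s: "s \<in> {\<sigma><..<t} - \<tau> ` {..I}"
    then obtain j where j: "\<tau> j \<le> s" "s < \<tau> (Suc j)" using piece_exists[of s] assms by auto
    moreover have "j < I" using less_of_tau_less[of j I] j s I by auto
    ultimately have "\<tau> j < s" using s by (auto simp: order.order_iff_strict)
    with j show "(x has_vector_derivative f_along s + g_along s *v \<theta>) (at s)"
      using x_deriv_inside_piece[of j s] f_along_eq_piece[of s j] g_along_eq_piece[of s j]
      by (simp add: cl_field_def f_piece_def g_piece_def)
  qed (use assms in auto)
qed

definition "g_primitive t = integral {0..t} g_along"

lemma sint_g_along:
  assumes "0 \<le> \<sigma>" "0 \<le> t"
  shows "sint \<sigma> t g_along = g_primitive t - g_primitive \<sigma>"
proof (cases "\<sigma> \<le> t")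
  case True
  have "integral {0..\<sigma>} g_along + integral {\<sigma>..t} g_along = integral {0..t} g_along"
    by (rule Henstock_Kurzweil_Integration.integral_combine[OF assms(1) True g_along_integrable]) simp
  then show ?thesis using True by (simp add: sint_def g_primitive_def algebra_simps)
next
  case False
  have "integral {0..t} g_along + integral {t..\<sigma>} g_along = integral {0..\<sigma>} g_along"
    using False
    by (intro Henstock_Kurzweil_Integration.integral_combine[OF assms(2) _ g_along_integrable]) auto
  then show ?thesis using False by (simp add: sint_def g_primitive_def algebra_simps)
qed

lemma regression_identity:
  assumes "0 \<le> \<sigma>" "0 \<le> t"
  shows "x t - x \<sigma> - sint \<sigma> t f_along = sint \<sigma> t g_along *v \<theta>"
proof -
  have *: "x t - x \<sigma> = integral {\<sigma>..t} f_along + integral {\<sigma>..t} g_along *v \<theta>"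
    if "0 \<le> \<sigma>" "\<sigma> \<le> t" for \<sigma> t
  proof -
    have "x t - x \<sigma> = integral {\<sigma>..t} (\<lambda>s. f_along s + g_along s *v \<theta>)"
      using x_increment_has_integral[OF that] by (simp add: integral_unique)
    also have "\<dots> = integral {\<sigma>..t} f_along + integral {\<sigma>..t} (\<lambda>s. g_along s *v \<theta>)"
      using f_along_integrable[OF that(1)] integrable_linear[OF g_along_integrable[OF that(1)]
          bounded_linear_matrix_vector_mult_left]
      by (intro integral_add) (auto simp: o_def)
    also have "integral {\<sigma>..t} (\<lambda>s. g_along s *v \<theta>) = integral {\<sigma>..t} g_along *v \<theta>"
      using integral_linear[OF g_along_integrable bounded_linear_matrix_vector_mult_left] that
      by (simp add: o_def)
    finally show ?thesis .
  qed
  show ?thesis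
  proof (cases "\<sigma> \<le> t")
    case False
    have "(- integral {t..\<sigma>} g_along) *v \<theta> = - (integral {t..\<sigma>} g_along *v \<theta>)"
      using matrix_vector_mult_diff_rdistrib[of 0 "integral {t..\<sigma>} g_along" \<theta>] by simp
    with *[of t \<sigma>] False assms show ?thesis by (simp add: sint_def algebra_simps)
  qed (use *[of \<sigma> t] assms in \<open>simp add: sint_def\<close>)
qed

lemma continuous_on_g_primitive: "continuous_on {0..b} g_primitive"
  unfolding g_primitive_def[abs_def]
  by (rule indefinite_integral_continuous_1[OF g_along_integrable]) simp

text \<open>window_start i, gram i and moment i are \<mu>_(i+1), G and Z of the update at \<tau> (i+1).\<close>
definition "window_start i = Min {\<tau> j | j. j \<le> i \<and> \<tau> j \<ge> \<tau> (Suc i) - real Nt * T}"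
definition "gram i = integral {window_start i..\<tau> (Suc i)} (\<lambda>t. integral {window_start i..\<tau> (Suc i)}
  (\<lambda>\<sigma>. transpose (sint \<sigma> t g_along) ** sint \<sigma> t g_along))"
definition "moment i = integral {window_start i..\<tau> (Suc i)} (\<lambda>t. integral {window_start i..\<tau> (Suc i)}
  (\<lambda>\<sigma>. transpose (sint \<sigma> t g_along) *v (x t - x \<sigma> - sint \<sigma> t f_along)))"

lemma update: "gram i *v th (\<tau> (Suc i)) = moment i \<and>
  (\<forall>\<eta>. gram i *v \<eta> = moment i \<longrightarrow>
     (norm (th (\<tau> (Suc i)) - th (\<tau> i)))\<^sup>2 \<le> (norm (\<eta> - th (\<tau> i)))\<^sup>2)"
  using hybrid_sol
  unfolding hybrid_sol_def Let_def gram_def moment_def window_start_def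
    f_along_def[abs_def] g_along_def[abs_def]
  by blast

lemma window_start_is_tau: "\<exists>j\<le>i. window_start i = \<tau> j"
  and window_start_le: "j \<le> i \<Longrightarrow> \<tau> (Suc i) - real Nt * T \<le> \<tau> j \<Longrightarrow> window_start i \<le> \<tau> j"
proof -
  let ?S = "{\<tau> j | j. j \<le> i \<and> \<tau> j \<ge> \<tau> (Suc i) - real Nt * T}"
  have "real Nt * T \<ge> T" using Nt_pos T_pos by simp
  then have "\<tau> i \<in> ?S" using tau_Suc_le[of i] by auto
  then show "\<exists>j\<le>i. window_start i = \<tau> j"
    using Min_in[of ?S] unfolding window_start_def by auto
  assume "j \<le> i" "\<tau> (Suc i) - real Nt * T \<le> \<tau> j"
  then show "window_start i \<le> \<tau> j" unfolding window_start_def by (intro Min_le) auto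
qed

lemma window_start_nonneg: "0 \<le> window_start i"
  and window_start_less: "window_start i < \<tau> (Suc i)"
  using window_start_is_tau[of i] tau_nonneg tau_strict_mono[THEN strict_monoD, of _ "Suc i"]
  by auto

definition "gram_integrand t \<sigma> =
  transpose (g_primitive t - g_primitive \<sigma>) ** (g_primitive t - g_primitive \<sigma>)"

lemma continuous_on_g_primitive_diff:
  "0 \<le> c \<Longrightarrow> continuous_on ({c..d} \<times> {c..d}) (\<lambda>(t, \<sigma>). g_primitive t - g_primitive \<sigma>)"
  using continuous_on_g_primitive[of d]
  by (auto simp: case_prod_unfold intro!: continuous_on_diff
        intro: continuous_on_compose2[OF _ continuous_on_fst] continuous_on_compose2[OF _ continuous_on_snd])

lemma gram_integrand_cont:
  "0 \<le> c \<Longrightarrow> continuous_on ({c..d} \<times> {c..d}) (\<lambda>(t, \<sigma>). gram_integrand t \<sigma>)"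
  unfolding gram_integrand_def[abs_def]
  using continuous_on_matrix_matrix_mult[OF continuous_on_transpose[OF continuous_on_g_primitive_diff]
      continuous_on_g_primitive_diff]
  by (simp add: case_prod_unfold)

lemma gram_eq: "gram i = integral {window_start i..\<tau> (Suc i)}
  (\<lambda>t. integral {window_start i..\<tau> (Suc i)} (gram_integrand t))"
  unfolding gram_def
  by (intro integral_cong)
    (use window_start_nonneg[of i] in \<open>simp add: sint_g_along gram_integrand_def\<close>)

lemma moment_eq: "moment i = gram i *v \<theta>"
proof -
  have "moment i = integral {window_start i..\<tau> (Suc i)}
      (\<lambda>t. integral {window_start i..\<tau> (Suc i)} (\<lambda>\<sigma>. gram_integrand t \<sigma> *v \<theta>))"
    unfolding moment_def
    by (intro integral_cong) (use window_start_nonneg[of i] in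
        \<open>simp add: regression_identity sint_g_along gram_integrand_def matrix_vector_mul_assoc\<close>)
  also have "\<dots> = gram i *v \<theta>"
    unfolding gram_eq
    by (rule integral_integral_bounded_linear[OF gram_integrand_cont[OF window_start_nonneg]
          bounded_linear_matrix_vector_mult_left])
  finally show ?thesis .
qed

lemma estimate_step_le: "norm (th (\<tau> (Suc i)) - th (\<tau> i)) \<le> norm (\<theta> - th (\<tau> i))"
  using update[of i] moment_eq[of i] by (simp add: power2_le_iff_abs_le)

lemma estimate_stays:
  assumes "th (\<tau> i) = \<theta>" "i \<le> j" shows "th (\<tau> j) = \<theta>"
  using assms(2)
proof (induction j rule: dec_induct)
  case (step j) then show ?case using estimate_step_le[of j] by simp
qed (use assms(1) in simp)

lemma estimate_error_le: "norm (th (\<tau> i) - \<theta>) \<le> 2 ^ i * norm (th 0 - \<theta>)"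
proof (induction i)
  case (Suc i)
  have "norm (th (\<tau> (Suc i)) - \<theta>) \<le> norm (th (\<tau> (Suc i)) - th (\<tau> i)) + norm (th (\<tau> i) - \<theta>)"
    using norm_triangle_ineq[of "th (\<tau> (Suc i)) - th (\<tau> i)" "th (\<tau> i) - \<theta>"] by simp
  also have "\<dots> \<le> 2 * norm (th (\<tau> i) - \<theta>)"
    using estimate_step_le[of i] by (simp add: norm_minus_commute)
  finally show ?case using Suc by simp
qed (simp add: tau_0)

lemma inner_gram_integrand:
  "d \<bullet> (gram_integrand t \<sigma> *v d) = (norm ((g_primitive t - g_primitive \<sigma>) *v d))\<^sup>2"
proof -
  let ?A = "g_primitive t - g_primitive \<sigma>"
  have "gram_integrand t \<sigma> *v d = (?A *v d) v* ?A"
    by (simp add: gram_integrand_def matrix_vector_mul_assoc[symmetric])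
  then have "d \<bullet> (gram_integrand t \<sigma> *v d) = ((?A *v d) v* ?A) \<bullet> d"
    by (simp add: inner_commute)
  also have "\<dots> = (?A *v d) \<bullet> (?A *v d)" by (rule dot_lmul_matrix)
  finally show ?thesis by (simp add: power2_norm_eq_inner)
qed

text \<open>Since G is an integral of the positive semidefinite matrices q' q, its kernel is
  annihilated by every q(t, \<sigma>) in the window.\<close>
lemma gram_kernel_imp_g_primitive_diff_kernel:
  assumes "gram i *v d = 0"
    and "t \<in> {window_start i..\<tau> (Suc i)}" "\<sigma> \<in> {window_start i..\<tau> (Suc i)}"
  shows "(g_primitive t - g_primitive \<sigma>) *v d = 0"
proof -
  let ?c = "window_start i" and ?d = "\<tau> (Suc i)"
  have "bounded_linear (\<lambda>A. d \<bullet> (A *v d))"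
    by (rule bounded_linear_compose[OF bounded_linear_inner_right bounded_linear_matrix_vector_mult_left])
  then have "integral {?c..?d} (\<lambda>t. integral {?c..?d} (\<lambda>\<sigma>. d \<bullet> (gram_integrand t \<sigma> *v d)))
      = d \<bullet> (gram i *v d)"
    unfolding gram_eq
    by (rule integral_integral_bounded_linear[OF gram_integrand_cont[OF window_start_nonneg]])
  then have "integral {?c..?d}
      (\<lambda>t. integral {?c..?d} (\<lambda>\<sigma>. (norm ((g_primitive t - g_primitive \<sigma>) *v d))\<^sup>2)) = 0"
    using assms(1) by (simp add: inner_gram_integrand)
  moreover have "continuous_on ({?c..?d} \<times> {?c..?d})
      (\<lambda>(t, \<sigma>). (norm ((g_primitive t - g_primitive \<sigma>) *v d))\<^sup>2)"
    unfolding case_prod_unfold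
    by (intro continuous_intros bounded_linear.continuous_on[OF bounded_linear_matrix_vector_mult_left]
        continuous_on_g_primitive_diff[OF window_start_nonneg, unfolded case_prod_unfold])
  ultimately have "(norm ((g_primitive t - g_primitive \<sigma>) *v d))\<^sup>2 = 0"
    by (intro integral_integral_nonneg_eq_0_imp_eq_0[OF _ _ window_start_less _ assms(2,3),
          where h = "\<lambda>t \<sigma>. (norm ((g_primitive t - g_primitive \<sigma>) *v d))\<^sup>2"]) auto
  then show ?thesis by simp
qed

lemma gram_kernel_imp_g_piece_kernel:
  assumes "gram i *v d = 0" and "j \<le> i" "window_start i \<le> \<tau> j" and t: "t \<in> {\<tau> j..\<tau> (Suc j)}"
  shows "g_piece j t *v d = 0"
proof -
  let ?a = "\<tau> j" and ?b = "\<tau> (Suc j)"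
  have "?b \<le> \<tau> (Suc i)" using assms(2) by (intro tau_mono) simp
  have g_cont: "continuous_on {?a..?b} (g_piece j)"
    by (rule continuous_on_subset[OF continuous_on_g_piece]) (use tau_nonneg in auto)
  have primitive_0: "integral {?a..s} (\<lambda>r. g_piece j r *v d) = 0" if s: "s \<in> {?a..?b}" for s
  proof -
    have "integral {?a..s} (\<lambda>r. g_piece j r *v d) = integral {?a..s} (g_piece j) *v d"
      using integral_linear[OF integrable_continuous_real[OF continuous_on_subset[OF g_cont]]
          bounded_linear_matrix_vector_mult_left, of ?a s] s
      by (simp add: o_def)
    also have "integral {?a..s} (g_piece j) = integral {?a..s} g_along"
      by (rule integral_spike[of "{s}"]) (use g_along_eq_piece s in auto)
    also have "\<dots> = g_primitive s - g_primitive ?a"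
      using sint_g_along[of ?a s] s tau_nonneg[of j] by (simp add: sint_def)
    finally show ?thesis
      using gram_kernel_imp_g_primitive_diff_kernel[OF assms(1), of s ?a] s assms(3)
        \<open>?b \<le> \<tau> (Suc i)\<close> window_start_less[of i]
      by auto
  qed
  have "((\<lambda>s. integral {?a..s} (\<lambda>r. g_piece j r *v d)) has_vector_derivative g_piece j t *v d)
      (at t within {?a..?b})"
    by (rule integral_has_vector_derivative[OF bounded_linear.continuous_on[OF
          bounded_linear_matrix_vector_mult_left g_cont] t])
  then have "((\<lambda>s. 0) has_vector_derivative g_piece j t *v d) (at t within {?a..?b})"
    by (rule has_vector_derivative_transform[OF t, rotated]) (simp add: primitive_0)
  moreover have "((\<lambda>s. 0) has_vector_derivative 0) (at t within {?a..?b})"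
    by (rule has_vector_derivative_const)
  ultimately show ?thesis
    using vector_derivative_unique_within_closed_interval[of ?a ?b t "\<lambda>s. 0" "g_piece j t *v d" 0]
      tau_less_Suc[of j] t
    by (simp add: cbox_interval)
qed

lemma x_eq_0_on_piece:
  assumes "x (\<tau> i) = 0" and "t \<in> {\<tau> i..\<tau> (Suc i)}"
  shows "x t = 0"
proof -
  obtain \<delta> L where
    "\<And>z. norm z \<le> \<delta> \<Longrightarrow> norm (cl_field f g k (th (\<tau> i)) \<theta> z) \<le> L * norm z" "\<delta> > 0"
    using cl_field_linear_bound[of "th (\<tau> i)"] by blast
  then show ?thesis
  proof (rule ode_solution_from_0_eq_0)
    show "continuous_on {\<tau> i..\<tau> (Suc i)} x"
      by (rule continuous_on_subset[OF x_cont]) (use tau_nonneg in auto)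
  qed (use x_deriv_inside_piece assms in auto)
qed

lemma x_eq_0:
  assumes "x 0 = 0" and "0 \<le> t"
  shows "x t = 0"
proof -
  have at_events: "x (\<tau> i) = 0" for i
  proof (induction i)
    case (Suc i) then show ?case using x_eq_0_on_piece[of i "\<tau> (Suc i)"] tau_le_Suc[of i] by auto
  qed (use assms(1) tau_0 in simp)
  obtain j where "\<tau> j \<le> t" "t < \<tau> (Suc j)" using piece_exists[OF assms(2)] by blast
  then show ?thesis using x_eq_0_on_piece[OF at_events[of j], of t] by auto
qed

lemma norm_x_le_on_piece:
  assumes "K1 > 0"
    and V_ge: "\<And>y. K1 * (norm y)\<^sup>2 \<le> V (th (\<tau> i)) y"
    and Q_le: "\<And>y. Q (th (\<tau> i)) y \<le> K2 * (norm y)\<^sup>2"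
    and a_le: "\<And>y. a y \<le> A * (norm y)\<^sup>2"
    and t: "t \<in> {\<tau> i..\<tau> (Suc i)}"
  shows "norm (x t) \<le> sqrt ((K2 + A) / K1) * norm (x (\<tau> i))"
proof (cases "x (\<tau> i) = 0")
  case False
  have "K1 * (norm (x t))\<^sup>2 \<le> V (th (\<tau> i)) (x t)" by (rule V_ge)
  also have "\<dots> \<le> trigger_level i" by (rule V_le_trigger_level[OF False t])
  also have "\<dots> \<le> (K2 + A) * (norm (x (\<tau> i)))\<^sup>2"
    unfolding trigger_level_def using Q_le[of "x (\<tau> i)"] a_le[of "x (\<tau> i)"] by (simp add: algebra_simps)
  finally have "(norm (x t))\<^sup>2 \<le> (K2 + A) / K1 * (norm (x (\<tau> i)))\<^sup>2"
    using \<open>K1 > 0\<close> by (simp add: field_simps)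
  then have "sqrt ((norm (x t))\<^sup>2) \<le> sqrt ((K2 + A) / K1 * (norm (x (\<tau> i)))\<^sup>2)"
    by (rule real_sqrt_le_mono)
  moreover have "sqrt ((K2 + A) / K1 * (norm (x (\<tau> i)))\<^sup>2) = sqrt ((K2 + A) / K1) * norm (x (\<tau> i))"
    by (subst real_sqrt_mult) simp
  ultimately show ?thesis by simp
qed (use x_eq_0_on_piece t in simp)

lemma norm_x_le_on_piece_up_to_N:
  assumes "K1 > 0"
    and K: "\<And>y \<eta>. \<eta> \<in> cball \<theta> (2 ^ N * norm (th 0 - \<theta>)) \<Longrightarrow>
      K1 * (norm y)\<^sup>2 \<le> V \<eta> y \<and> Q \<eta> y \<le> K2 * (norm y)\<^sup>2"
    and a_le: "\<And>y. a y \<le> A * (norm y)\<^sup>2" and "i \<le> N" and s: "s \<in> {\<tau> i..\<tau> (Suc i)}"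
  shows "norm (x s) \<le> sqrt ((K2 + A) / K1) * norm (x (\<tau> i))"
proof -
  have "(2::real) ^ i \<le> 2 ^ N" using \<open>i \<le> N\<close> by (intro power_increasing) auto
  then have "th (\<tau> i) \<in> cball \<theta> (2 ^ N * norm (th 0 - \<theta>))"
    using estimate_error_le[of i] mult_right_mono[of "(2::real) ^ i" "2 ^ N" "norm (th 0 - \<theta>)"]
    by (simp add: dist_norm norm_minus_commute)
  with K show ?thesis by (intro norm_x_le_on_piece[OF \<open>K1 > 0\<close> _ _ a_le s]) auto
qed

lemma window_start_early: "Suc i \<le> Nt \<Longrightarrow> window_start i = 0"
proof -
  assume "Suc i \<le> Nt"
  have "real (Suc i) * T \<le> real Nt * T" using \<open>Suc i \<le> Nt\<close> T_pos by (intro mult_right_mono) auto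
  then have "\<tau> (Suc i) \<le> real Nt * T" using tau_le_multiple_T[of "Suc i"] by linarith
  then have "window_start i \<le> 0" using window_start_le[of 0 i] tau_0 by simp
  then show ?thesis using window_start_nonneg[of i] by simp
qed

lemma gram_kernel_estimate_error: "gram i *v (th (\<tau> (Suc i)) - \<theta>) = 0"
  using update[of i] moment_eq[of i] by (simp add: matrix_vector_mult_diff_distrib)

text \<open>Hypothesis (H3), applied to the errors d_i = th (\<tau> i) - \<theta>: before the estimate becomes
  exact, the window always starts at 0, so g d_(i+1) vanishes along all earlier pieces.\<close>
lemma estimate_exact_by_event_N:
  assumes "H3 f g k N" "N < Nt" "x 0 \<noteq> 0"
  shows "\<exists>p\<le>N. th (\<tau> p) = \<theta>"
proof (rule ccontr)
  assume "\<not> (\<exists>p\<le>N. th (\<tau> p) = \<theta>)"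
  define d where "d i = th (\<tau> i) - \<theta>" for i
  have "\<forall>i\<le>N. d i \<noteq> 0" using \<open>\<not> (\<exists>p\<le>N. _)\<close> by (simp add: d_def)
  moreover have "continuous_on {0..\<tau> N} x" by (rule continuous_on_subset[OF x_cont]) auto
  moreover have "\<forall>i<N. \<forall>t\<in>{\<tau> i..<\<tau> (Suc i)}. (x has_vector_derivative
      cl_field f g k (\<theta> + d i) \<theta> (x t)) (at t within {\<tau> i..\<tau> (Suc i)})"
    using x_deriv_on_piece by (simp add: d_def)
  moreover have "g (x t) (k (\<theta> + d j) (x t)) *v d (Suc i) = 0"
    if "i < N" "j \<le> i" "t \<in> {\<tau> j..\<tau> (Suc j)}" for i j t
  proof -
    have "window_start i \<le> \<tau> j" using window_start_early[of i] that \<open>N < Nt\<close> tau_nonneg[of j] by simp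
    from gram_kernel_imp_g_piece_kernel[OF gram_kernel_estimate_error that(2) this that(3)]
    show ?thesis by (simp add: d_def g_piece_def)
  qed
  ultimately have "\<forall>t\<in>{0..\<tau> N}. x t = 0"
    using assms(1) tau_0 tau_less_Suc unfolding H3_def
    by (elim allE[of _ \<tau>] allE[of _ \<theta>] allE[of _ d] allE[of _ x] impE) blast+
  then show False using assms(3) tau_nonneg[of N] by simp
qed

lemma field_after_exact_estimate:
  assumes "th (\<tau> p) = \<theta>" "\<tau> p \<le> s"
  shows "f_along s + g_along s *v \<theta> = cl_field f g k \<theta> \<theta> (x s)"
proof -
  obtain j where j: "\<tau> j \<le> s" "s < \<tau> (Suc j)"
    using piece_exists[of s] tau_nonneg[of p] assms(2) by auto
  then have "p \<le> j" using less_of_tau_less[of p "Suc j"] assms(2) by simp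
  then have "th s = \<theta>" using estimate_stays[OF assms(1)] th_on_piece[of s j] j by simp
  then show ?thesis by (simp add: f_along_def g_along_def cl_field_def)
qed

lemma x_deriv_after_exact_estimate:
  assumes "th (\<tau> p) = \<theta>" "\<tau> p \<le> t"
  shows "(x has_vector_derivative cl_field f g k \<theta> \<theta> (x t)) (at t within {\<tau> p..})"
proof -
  let ?F = "cl_field f g k \<theta> \<theta>" and ?c = "\<tau> p" and ?b = "t + 1"
  have "continuous_on {?c..?b} x" by (rule continuous_on_subset[OF x_cont]) (use tau_nonneg[of p] in auto)
  then have F_cont: "continuous_on {?c..?b} (\<lambda>s. ?F (x s))"
    by (rule continuous_on_compose2[OF continuous_on_cl_field[OF f_cont g_cont k_cont]]) simp
  have x_eq: "x u = x ?c + integral {?c..u} (\<lambda>s. ?F (x s))" if "u \<in> {?c..?b}" for u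
  proof -
    have "((\<lambda>s. f_along s + g_along s *v \<theta>) has_integral (x u - x ?c)) {?c..u}"
      using x_increment_has_integral[OF tau_nonneg[of p]] that by simp
    then have "((\<lambda>s. ?F (x s)) has_integral (x u - x ?c)) {?c..u}"
      by (rule has_integral_eq[rotated]) (simp add: field_after_exact_estimate[OF assms(1)])
    then show ?thesis by (simp add: integral_unique)
  qed
  have "((\<lambda>u. integral {?c..u} (\<lambda>s. ?F (x s))) has_vector_derivative ?F (x t)) (at t within {?c..?b})"
    by (rule integral_has_vector_derivative[OF F_cont]) (use assms(2) in auto)
  then have "((\<lambda>u. x ?c + integral {?c..u} (\<lambda>s. ?F (x s))) has_vector_derivative ?F (x t))
      (at t within {?c..?b})"
    by (rule has_vector_derivative_eq_rhs[OF has_vector_derivative_add[OF has_vector_derivative_const]])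
      simp
  then have "(x has_vector_derivative ?F (x t)) (at t within {?c..?b})"
  proof (rule has_vector_derivative_transform[rotated 2])
    show "t \<in> {?c..?b}" using assms(2) by simp
  qed (rule x_eq)
  moreover have "at t within {?c..?b} = at t within {?c..}"
  proof (rule at_within_nhd[of t "{..<?b}"])
    show "{?c..?b} \<inter> {..<?b} - {t} = {?c..} \<inter> {..<?b} - {t}" by auto
  qed auto
  ultimately show ?thesis by simp
qed

lemma shifted_is_sol_after_exact_estimate:
  assumes "th (\<tau> p) = \<theta>"
  shows "is_sol (cl_field f g k \<theta> \<theta>) (\<lambda>s. x (\<tau> p + s))"
  unfolding is_sol_def
proof (intro allI impI)
  fix s :: real assume "0 \<le> s"
  have "((\<lambda>s. \<tau> p + s) has_vector_derivative 1) (at s within {0..})"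
    by (auto intro!: derivative_eq_intros)
  moreover have "(x has_vector_derivative cl_field f g k \<theta> \<theta> (x (\<tau> p + s)))
      (at (\<tau> p + s) within (\<lambda>s. \<tau> p + s) ` {0..})"
    using x_deriv_after_exact_estimate[OF assms, of "\<tau> p + s"] \<open>0 \<le> s\<close> by simp
  ultimately show "((\<lambda>s. x (\<tau> p + s)) has_vector_derivative cl_field f g k \<theta> \<theta> (x (\<tau> p + s)))
      (at s within {0..})"
    using vector_diff_chain_within[of "\<lambda>s. \<tau> p + s" 1 s "{0..}" x] by (simp add: o_def)
qed

lemma norm_x_le_before_exact_estimate:
  assumes "c \<ge> 1"
    and "\<And>i s. i < p \<Longrightarrow> s \<in> {\<tau> i..\<tau> (Suc i)} \<Longrightarrow> norm (x s) \<le> c * norm (x (\<tau> i))"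
    and "0 \<le> t" "t \<le> \<tau> p"
  shows "norm (x t) \<le> c ^ p * norm (x 0)"
  using assms(2-4)
proof (induction p arbitrary: t)
  case 0 then show ?case using tau_0 by simp
next
  case (Suc p)
  show ?case
  proof (cases "t \<le> \<tau> p")
    case True
    then have "norm (x t) \<le> c ^ p * norm (x 0)" using Suc by simp
    also have "\<dots> \<le> c ^ Suc p * norm (x 0)"
      using \<open>c \<ge> 1\<close> by (intro mult_right_mono power_increasing) auto
    finally show ?thesis .
  next
    case False
    then have "norm (x t) \<le> c * norm (x (\<tau> p))" using Suc.prems by simp
    also have "\<dots> \<le> c * (c ^ p * norm (x 0))"
      using Suc tau_nonneg[of p] \<open>c \<ge> 1\<close> by (intro mult_left_mono) auto
    finally show ?thesis by simp
  qed
qed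

lemma norm_x_le_after_exact_estimate:
  assumes "th (\<tau> p) = \<theta>" "\<tau> p \<le> t"
    and GES: "\<forall>y. is_sol (cl_field f g k \<theta> \<theta>) y \<longrightarrow>
      (\<forall>t\<ge>0. norm (y t) \<le> Me * exp (- \<omega> * t) * norm (y 0))"
  shows "norm (x t) \<le> Me * exp (- \<omega> * (t - \<tau> p)) * norm (x (\<tau> p))"
  using GES[rule_format, OF shifted_is_sol_after_exact_estimate[OF assms(1)], of "t - \<tau> p"] assms(2)
  by simp

lemma norm_x_exponential_bound:
  assumes "c \<ge> 1"
    and piece: "\<And>i s. i < p \<Longrightarrow> s \<in> {\<tau> i..\<tau> (Suc i)} \<Longrightarrow> norm (x s) \<le> c * norm (x (\<tau> i))"
    and "p \<le> N" "th (\<tau> p) = \<theta>" and "Me > 0" "\<omega> > 0"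
    and GES: "\<forall>y. is_sol (cl_field f g k \<theta> \<theta>) y \<longrightarrow>
      (\<forall>t\<ge>0. norm (y t) \<le> Me * exp (- \<omega> * t) * norm (y 0))"
    and "0 \<le> t"
  shows "norm (x t) \<le> max 1 Me * c ^ N * exp (\<omega> * (real N * T)) * exp (- \<omega> * t) * norm (x 0)"
proof -
  let ?E = "exp (\<omega> * (real N * T - t))"
  have "real p * T \<le> real N * T" using \<open>p \<le> N\<close> T_pos by (intro mult_right_mono) auto
  then have "\<tau> p \<le> real N * T" using tau_le_multiple_T[of p] by linarith
  have "c ^ p \<le> c ^ N" using \<open>p \<le> N\<close> \<open>c \<ge> 1\<close> by (rule power_increasing)
  then have before: "norm (x s) \<le> c ^ N * norm (x 0)" if "0 \<le> s" "s \<le> \<tau> p" for s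
    using norm_x_le_before_exact_estimate[OF \<open>c \<ge> 1\<close> piece that] mult_right_mono[of _ _ "norm (x 0)"]
    by (meson norm_ge_zero order_trans)
  have "\<omega> * \<tau> p \<le> \<omega> * (real N * T)"
    using \<open>\<tau> p \<le> real N * T\<close> \<open>\<omega> > 0\<close> by (intro mult_left_mono) auto
  then have "exp (- \<omega> * (t - \<tau> p)) \<le> ?E" by (simp add: algebra_simps)
  have "c ^ N * norm (x 0) \<ge> 0" using \<open>c \<ge> 1\<close> by simp
  have "norm (x t) \<le> (max 1 Me * ?E) * (c ^ N * norm (x 0))"
  proof (cases "t \<le> \<tau> p")
    case True
    have "1 \<le> ?E" using True \<open>\<tau> p \<le> real N * T\<close> \<open>\<omega> > 0\<close> by simp
    then have "1 \<le> max 1 Me * ?E" using mult_mono[of 1 "max 1 Me" 1 ?E] by simp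
    then show ?thesis
      using before[OF \<open>0 \<le> t\<close> True] mult_right_mono[OF _ \<open>c ^ N * norm (x 0) \<ge> 0\<close>] by fastforce
  next
    case False
    have "norm (x t) \<le> (Me * exp (- \<omega> * (t - \<tau> p))) * norm (x (\<tau> p))"
      using norm_x_le_after_exact_estimate[OF \<open>th (\<tau> p) = \<theta>\<close> _ GES] False by simp
    also have "\<dots> \<le> (max 1 Me * ?E) * (c ^ N * norm (x 0))"
      using before[OF tau_nonneg order.refl] \<open>Me > 0\<close> \<open>exp (- \<omega> * (t - \<tau> p)) \<le> ?E\<close>
        \<open>c ^ N * norm (x 0) \<ge> 0\<close>
      by (intro mult_mono) auto
    finally show ?thesis .
  qed
  also have "?E = exp (\<omega> * (real N * T)) * exp (- \<omega> * t)"
    by (simp add: algebra_simps flip: exp_add)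
  finally show ?thesis by (simp add: algebra_simps)
qed

end

lemma hybrid_sol_exponential_bound:
  fixes f :: "real^'n \<Rightarrow> real^'m \<Rightarrow> real^'n"
    and g :: "real^'n \<Rightarrow> real^'m \<Rightarrow> real^'l^'n"
    and k :: "real^'l \<Rightarrow> real^'n \<Rightarrow> real^'m"
    and V Q :: "real^'l \<Rightarrow> real^'n \<Rightarrow> real"
  assumes f_cont: "continuous_on UNIV (\<lambda>(x, u). f x u)"
    and g_cont: "continuous_on UNIV (\<lambda>(x, u). g x u)"
    and k_cont: "continuous_on UNIV (\<lambda>(\<eta>, x). k \<eta> x)"
    and cl_field_linear_bound:
      "\<And>\<eta>. \<exists>\<delta>>0. \<exists>L\<ge>0. \<forall>z. norm z \<le> \<delta> \<longrightarrow> norm (cl_field f g k \<eta> \<theta> z) \<le> L * norm z"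
    and V_cont: "\<And>\<eta>. continuous_on UNIV (V \<eta>)"
    and quad: "\<And>\<Theta>. compact \<Theta> \<Longrightarrow> \<Theta> \<noteq> {} \<Longrightarrow>
      \<exists>K1 K2. 0 < K1 \<and> K1 < K2 \<and> (\<forall>x. \<forall>\<eta>\<in>\<Theta>.
        K1 * (norm x)\<^sup>2 \<le> V \<eta> x \<and> V \<eta> x \<le> Q \<eta> x \<and> Q \<eta> x \<le> K2 * (norm x)\<^sup>2)"
    and a_pos: "\<And>y. y \<noteq> 0 \<Longrightarrow> a y > 0" and a_le: "\<And>y. a y \<le> A * (norm y)\<^sup>2" and "A \<ge> 0"
    and "T > 0" "H3 f g k N" "N < Nt"
    and "Me > 0" "\<omega> > 0"
    and GES: "\<forall>y. is_sol (cl_field f g k \<theta> \<theta>) y \<longrightarrow>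
      (\<forall>t\<ge>0. norm (y t) \<le> Me * exp (- \<omega> * t) * norm (y 0))"
  shows "\<exists>M>0. \<forall>\<tau> x th. hybrid_sol f g k V Q a T Nt \<theta> \<tau> x th \<and> th 0 = \<theta>h0 \<longrightarrow>
    (\<forall>t\<ge>0. norm (x t) \<le> M * exp (- \<omega> * t) * norm (x 0))"
proof -
  obtain K1 K2 where "0 < K1" "K1 < K2" and K: "\<forall>y. \<forall>\<eta>\<in>cball \<theta> (2 ^ N * norm (\<theta>h0 - \<theta>)).
      K1 * (norm y)\<^sup>2 \<le> V \<eta> y \<and> V \<eta> y \<le> Q \<eta> y \<and> Q \<eta> y \<le> K2 * (norm y)\<^sup>2"
    using quad[of "cball \<theta> (2 ^ N * norm (\<theta>h0 - \<theta>))"] by (auto simp: mult_less_0_iff)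
  have V_le_Q: "V \<eta> y \<le> Q \<eta> y" for \<eta> y
  proof -
    obtain K1 K2 where "\<forall>y. \<forall>\<eta>'\<in>{\<eta>}.
        K1 * (norm y)\<^sup>2 \<le> V \<eta>' y \<and> V \<eta>' y \<le> Q \<eta>' y \<and> Q \<eta>' y \<le> K2 * (norm y)\<^sup>2"
      using quad[of "{\<eta>}"] by auto
    then show ?thesis by simp
  qed
  define c where "c = sqrt ((K2 + A) / K1)"
  have "1 \<le> (K2 + A) / K1" using \<open>0 < K1\<close> \<open>K1 < K2\<close> \<open>A \<ge> 0\<close> by (simp add: field_simps)
  then have "c \<ge> 1" unfolding c_def using real_sqrt_le_mono[of 1] by fastforce
  define M where "M = max 1 Me * c ^ N * exp (\<omega> * (real N * T))"
  have "norm (x t) \<le> M * exp (- \<omega> * t) * norm (x 0)"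
    if "hybrid_sol f g k V Q a T Nt \<theta> \<tau> x th" "th 0 = \<theta>h0" "0 \<le> t" for \<tau> x th t
  proof -
    have "Nt > 0" using \<open>N < Nt\<close> by simp
    interpret hybrid_trajectory f g k V Q a T Nt \<theta> \<tau> x th
      using that(1) f_cont g_cont k_cont \<open>T > 0\<close> \<open>Nt > 0\<close> V_le_Q V_cont a_pos cl_field_linear_bound
      by unfold_locales
    show ?thesis
    proof (cases "x 0 = 0")
      case False
      then obtain p where "p \<le> N" "th (\<tau> p) = \<theta>"
        using estimate_exact_by_event_N \<open>H3 f g k N\<close> \<open>N < Nt\<close> by blast
      have "norm (x s) \<le> c * norm (x (\<tau> i))" if "i < p" "s \<in> {\<tau> i..\<tau> (Suc i)}" for i s
        unfolding c_def using K \<open>th 0 = \<theta>h0\<close> \<open>p \<le> N\<close> that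
        by (intro norm_x_le_on_piece_up_to_N[where N = N, OF \<open>0 < K1\<close> _ a_le]) auto
      from norm_x_exponential_bound[OF \<open>c \<ge> 1\<close> this \<open>p \<le> N\<close> \<open>th (\<tau> p) = \<theta>\<close> \<open>Me > 0\<close> \<open>\<omega> > 0\<close> GES
          \<open>0 \<le> t\<close>]
      show ?thesis by (simp add: M_def)
    qed (use x_eq_0 \<open>0 \<le> t\<close> in simp)
  qed
  moreover have "M > 0" using \<open>c \<ge> 1\<close> by (simp add: M_def)
  ultimately show ?thesis by blast
qed

theorem theorem3p3:
  fixes f :: "real^'n \<Rightarrow> real^'m \<Rightarrow> real^'n"
    and g :: "real^'n \<Rightarrow> real^'m \<Rightarrow> real^'l^'n"
    and k :: "real^'l \<Rightarrow> real^'n \<Rightarrow> real^'m"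
    and V Q :: "real^'l \<Rightarrow> real^'n \<Rightarrow> real"
    and Mexp \<omega> :: "real^'l \<Rightarrow> real"
    and a :: "real^'n \<Rightarrow> real"
    and N Nt :: nat and T :: real
  assumes f_smooth: "smooth (\<lambda>(x, u). f x u)" and f0: "f 0 0 = 0"
    and g_smooth: "smooth (\<lambda>(x, u). g x u)" and g0: "g 0 0 = 0"
    and k_smooth: "smooth (\<lambda>(\<eta>, x). k \<eta> x)" and k0: "\<And>\<eta>. k \<eta> 0 = 0"
    and V_nonneg: "\<And>\<eta> x. V \<eta> x \<ge> 0" and Q_nonneg: "\<And>\<eta> x. Q \<eta> x \<ge> 0"
    and V_cont: "\<And>\<eta>. continuous_on UNIV (V \<eta>)" and Q_cont: "\<And>\<eta>. continuous_on UNIV (Q \<eta>)"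
    and V_pd: "\<And>\<eta>. pos_def (V \<eta>)" and Q_pd: "\<And>\<eta>. pos_def (Q \<eta>)"
    and V_ru: "\<And>\<eta>. rad_unbounded (V \<eta>)" and Q_ru: "\<And>\<eta>. rad_unbounded (Q \<eta>)"
    and V_jcont: "continuous_on UNIV (\<lambda>(\<eta>, x). V \<eta> x)"
    and Q_jcont: "continuous_on UNIV (\<lambda>(\<eta>, x). Q \<eta> x)"
    and H1_GAS: "\<And>\<eta>. GAS (cl_field f g k \<eta> \<eta>)"
    and H1_VQ: "\<And>\<eta> x t. is_sol (cl_field f g k \<eta> \<eta>) x \<Longrightarrow> t \<ge> 0 \<Longrightarrow>
                   V \<eta> (x t) \<le> Q \<eta> (x 0)"
    and H2: "\<And>\<Theta> M. compact \<Theta> \<Longrightarrow> \<Theta> \<noteq> {} \<Longrightarrow> M \<ge> 0 \<Longrightarrow>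
               \<exists>R>0. \<forall>\<eta>\<in>\<Theta>. \<forall>x. V \<eta> x \<le> M \<longrightarrow> norm x \<le> R"
    and N_pos: "N > 0" and H3: "H3 f g k N"
    and GES: "\<And>\<eta>. Mexp \<eta> > 0 \<and> \<omega> \<eta> > 0 \<and>
               (\<forall>x. is_sol (cl_field f g k \<eta> \<eta>) x \<longrightarrow>
                  (\<forall>t\<ge>0. norm (x t) \<le> Mexp \<eta> * exp (- \<omega> \<eta> * t) * norm (x 0)))"
    and quad: "\<And>\<Theta>. compact \<Theta> \<Longrightarrow> \<Theta> \<noteq> {} \<Longrightarrow>
               \<exists>K1 K2. 0 < K1 \<and> K1 < K2 \<and> (\<forall>x. \<forall>\<eta>\<in>\<Theta>.
                  K1 * (norm x)\<^sup>2 \<le> V \<eta> x \<and> V \<eta> x \<le> Q \<eta> x \<and> Q \<eta> x \<le> K2 * (norm x)\<^sup>2)"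
    and T_pos: "T > 0"
    and a_nonneg: "\<And>x. a x \<ge> 0" and a_cont: "continuous_on UNIV a" and a_pd: "pos_def a"
    and a_quad: "bdd_above {a x / (norm x)\<^sup>2 | x. x \<noteq> 0}"
    and Nt: "Nt > N"
  shows "\<exists>Mt :: real^'l \<Rightarrow> real^'l \<Rightarrow> real. (\<forall>\<theta> \<theta>h. Mt \<theta> \<theta>h > 0) \<and>
           (\<forall>\<theta> x0 \<theta>h0 \<tau> x th. hybrid_sol f g k V Q a T Nt \<theta> \<tau> x th \<and> x 0 = x0 \<and> th 0 = \<theta>h0 \<longrightarrow>
              (\<forall>t\<ge>0. norm (x t) \<le> Mt \<theta> \<theta>h0 * exp (- \<omega> \<theta> * t) * norm x0))"
proof -
  have cont: "continuous_on UNIV (\<lambda>(x, u). f x u)" "continuous_on UNIV (\<lambda>(x, u). g x u)"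
    "continuous_on UNIV (\<lambda>(\<eta>, x). k \<eta> x)"
    using f_smooth g_smooth k_smooth by (auto intro: smooth_imp_continuous_on)
  obtain A where A: "A \<ge> 0" "\<And>y. a y \<le> A * (norm y)\<^sup>2"
    using bdd_above_quotient_imp_quadratic_bound[OF a_quad] a_pd by (auto simp: pos_def_def)
  have "\<exists>M>0. \<forall>\<tau> x th. hybrid_sol f g k V Q a T Nt \<theta> \<tau> x th \<and> th 0 = \<theta>h0 \<longrightarrow>
      (\<forall>t\<ge>0. norm (x t) \<le> M * exp (- \<omega> \<theta> * t) * norm (x 0))" for \<theta> \<theta>h0
    using cont cl_field_linear_bound_near_0[OF f_smooth f0 g_smooth g0 k_smooth k0] V_cont quad
      a_pd A T_pos H3 Nt GES[of \<theta>]
    by (intro hybrid_sol_exponential_bound[where A = A and Me = "Mexp \<theta>"]) (auto simp: pos_def_def)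
  then obtain Mt where "\<forall>\<theta> \<theta>h0. Mt \<theta> \<theta>h0 > 0 \<and> (\<forall>\<tau> x th. hybrid_sol f g k V Q a T Nt \<theta> \<tau> x th \<and>
      th 0 = \<theta>h0 \<longrightarrow> (\<forall>t\<ge>0. norm (x t) \<le> Mt \<theta> \<theta>h0 * exp (- \<omega> \<theta> * t) * norm (x 0)))"
    by metis
  then show ?thesis by (intro exI[of _ Mt]) blast
qed

end
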